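(* Consider the following networked control setting. Let $f_p:\mathbb{R}^{n_p}\times\mathbb{R}^{m_p}\to\mathbb{R}^{n_p}$ with $f_p(0,0)=0$, closed sets $\mathbb{X}_p\subseteq\mathbb{R}^{n_p}$, $\mathbb{U}_p\subseteq\mathbb{R}^{m_p}$ containing the origin, matrices $Q,R>0$, and integers $g\in\mathbb{I}_{\geq 1}$, $c\in\mathbb{I}_{\geq g}$, $b\in\mathbb{I}_{\geq c}$, $q:=\lceil c/g\rceil$. The overall state is $x=(x_p,u_s,\beta)\in\mathbb{X}:=\mathbb{X}_p\times\mathbb{U}_p\times\mathbb{I}_{[0,b]}$, the input $u=(u_c,\gamma)\in\mathbb{U}:=\mathbb{U}_p\times\{0,1\}$, and the dynamics are $x(k+1)=f(x(k),u(k))$ with $$f(x,u)=\big(f_p(x_p,\gamma u_c+(1-\gamma)u_s),\ \gamma u_c+(1-\gamma)u_s,\ \min\{\beta+g-\gamma c,b\}\big),$$ stage cost $\ell(x,u)=\|x_p\|_Q^2+\gamma\|u_c\|_R^2+(1-\gamma)\|u_s\|_R^2$. For $u_c\in\mathbb{U}_p$ define $f_{p,0}(x_p,u_c):=x_p$, $f_{p,i}(x_p,u_c):=f_p(f_{p,i-1}(x_p,u_c),u_c)$. Assume: (A1) there exist a closed set $\mathbb{X}_{f,p}\subseteq\mathbb{X}_p$ containing the origin and $k_p:\mathbb{X}_{f,p}\to\mathbb{U}_p$ such that for all $x_p\in\mathbb{X}_{f,p}$: $f_{p,i}(x_p,k_p(x_p))\in\mathbb{X}_p$ for all $i\in\mathbb{I}_{[1,q-1]}$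 and $f_{p,q}(x_p,k_p(x_p))\in\mathbb{X}_{f,p}$; (A2) there is a continuous positive definite $V_{f,p}:\mathbb{X}_{f,p}\to\mathbb{R}$ with, for all $x_p\in\mathbb{X}_{f,p}$, $V_{f,p}(f_{p,q}(x_p,k_p(x_p)))-V_{f,p}(x_p)\leq -q\|k_p(x_p)\|_R^2-\sum_{i=0}^{q-1}\|f_{p,i}(x_p,k_p(x_p))\|_Q^2$; (A3) $c/g\notin\mathbb{I}$. Let $\sigma>0$, $V_f(x):=V_{f,p}(x_p)+\sigma(b^2-\beta^2)$, and $\mathbb{X}_f:=\big(\{0\}\times\{0\}\times\mathbb{I}_{[0,c-g-1]}\big)\cup\big(\mathbb{X}_{f,p}\times\mathbb{U}_p\times\mathbb{I}_{[c-g,b]}\big)$. Fix $r\in\mathbb{I}_{\geq1}$, $M:=rq$, and $N\in\mathbb{I}_{\geq M}$. The closed loop is generated by the rollout scheme: at each $k=jM$, $j\in\mathbb{I}_{\geq0}$, solve the problem $\mathbb{P}(x(jM))$: minimize $\sum_{i=0}^{N-1}\ell(x(i|jM),u(i|jM))+V_f(x(N|jM))$ over $u(0|jM),\dots,u(N-1|jM)$ subject to $x(i+1|jM)=f(x(i|jM),u(i|jM))$, $x(i|jM)\in\mathbb{X}$, $u(i|jM)\in\mathbb{U}$ for $i\in\mathbb{I}_{[0,N-1]}$, $x(0|jM)=x(jM)$, $x(N|jM)\in\mathbb{X}_f$, with optimizer $u^*(\cdot|jM)$, and apply $u(jM+i)=u^*(i|jM)$ for $i\in\mathbb{I}_{[0,M-1]}$.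 Then, if $\mathbb{P}(x(0))$ is feasible, $\mathbb{P}(x(jM))$ is feasible for all $j\in\mathbb{I}_{\geq0}$, and $x_p(k)\to0$ and $u_s(k)\to0$ as $k\to\infty$. Additionally, $\beta(k)$ converges to the set $[\max\{0,b-Ng\},b]$ as $k\to\infty$, and the subsequence $\beta(jM)$ converges to $[\max\{0,b-(N-M)g\},b]$ as $j\to\infty$.
   Context: $\mathbb{I}$ denotes the integers, $\mathbb{I}_{[a,b]}:=\mathbb{I}\cap[a,b]$, $\mathbb{I}_{\geq a}:=\mathbb{I}\cap[a,\infty)$, $\|v\|_A^2:=v^TAv$, and $A>0$ means positive definite. Here $x_p$ is the plant state, $u_s(k)=u_p(k-1)$ is the last applied input held by a zero-order-hold actuator, $\beta$ is the token level of a token bucket (size $b$, token rate $g$, transmission cost $c$), $u_c$ the computed control value and $\gamma\in\{0,1\}$ the transmission decision. "Feasible" means the constraint set of the optimization problem is nonempty. *)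

theory Defs
  imports "HOL-Analysis.Analysis"
begin

definition qf :: "real^'k^'k \<Rightarrow> real^'k \<Rightarrow> real" where
  "qf A v = v \<bullet> (A *v v)"

definition pos_def_mat :: "real^'k^'k \<Rightarrow> bool" where
  "pos_def_mat A \<longleftrightarrow> transpose A = A \<and> (\<forall>v. v \<noteq> 0 \<longrightarrow> qf A v > 0)"

definition fsys :: "(real^'n \<Rightarrow> real^'m \<Rightarrow> real^'n) \<Rightarrow> int \<Rightarrow> int \<Rightarrow> int
    \<Rightarrow> ((real^'n) \<times> (real^'m) \<times> int) \<Rightarrow> ((real^'m) \<times> nat) \<Rightarrow> ((real^'n) \<times> (real^'m) \<times> int)" where
  "fsys fp g c b x u =
     (case x of (xp, us, \<beta>) \<Rightarrow> case u of (uc, \<gamma>) \<Rightarrow>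
        (let ua = real \<gamma> *\<^sub>R uc + (1 - real \<gamma>) *\<^sub>R us
         in (fp xp ua, ua, min (\<beta> + g - int \<gamma> * c) b)))"

definition stage_cost :: "real^'n^'n \<Rightarrow> real^'m^'m
    \<Rightarrow> ((real^'n) \<times> (real^'m) \<times> int) \<Rightarrow> ((real^'m) \<times> nat) \<Rightarrow> real" where
  "stage_cost Q R x u =
     (case x of (xp, us, \<beta>) \<Rightarrow> case u of (uc, \<gamma>) \<Rightarrow>
        qf Q xp + real \<gamma> * qf R uc + (1 - real \<gamma>) * qf R us)"

definition fpi :: "(real^'n \<Rightarrow> real^'m \<Rightarrow> real^'n) \<Rightarrow> nat \<Rightarrow> real^'n \<Rightarrow> real^'m \<Rightarrow> real^'n" where
  "fpi fp i xp uc = ((\<lambda>z. fp z uc) ^^ i) xp"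

definition Xset :: "(real^'n) set \<Rightarrow> (real^'m) set \<Rightarrow> int \<Rightarrow> ((real^'n) \<times> (real^'m) \<times> int) set" where
  "Xset Xp Up b = Xp \<times> Up \<times> {0..b}"

definition Uset :: "(real^'m) set \<Rightarrow> ((real^'m) \<times> nat) set" where
  "Uset Up = Up \<times> {0, 1}"

definition Xf_set :: "(real^'n) set \<Rightarrow> (real^'m) set \<Rightarrow> int \<Rightarrow> int \<Rightarrow> int
    \<Rightarrow> ((real^'n) \<times> (real^'m) \<times> int) set" where
  "Xf_set Xfp Up c g b = ({0} \<times> {0} \<times> {0..c - g - 1}) \<union> (Xfp \<times> Up \<times> {c - g..b})"

definition Vf :: "(real^'n \<Rightarrow> real) \<Rightarrow> real \<Rightarrow> int \<Rightarrow> ((real^'n) \<times> (real^'m) \<times> int) \<Rightarrow> real" where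
  "Vf Vfp \<sigma> b x = Vfp (fst x) + \<sigma> * (real_of_int b ^ 2 - real_of_int (snd (snd x)) ^ 2)"

primrec pred_traj :: "('s \<Rightarrow> 'i \<Rightarrow> 's) \<Rightarrow> 's \<Rightarrow> (nat \<Rightarrow> 'i) \<Rightarrow> nat \<Rightarrow> 's" where
  "pred_traj f x0 u 0 = x0"
| "pred_traj f x0 u (Suc i) = f (pred_traj f x0 u i) (u i)"

definition ocp_feasible_seq :: "('s \<Rightarrow> 'i \<Rightarrow> 's) \<Rightarrow> 's set \<Rightarrow> 'i set \<Rightarrow> 's set \<Rightarrow> nat
    \<Rightarrow> 's \<Rightarrow> (nat \<Rightarrow> 'i) \<Rightarrow> bool" where
  "ocp_feasible_seq f X U Xf N x0 u \<longleftrightarrow>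
     (\<forall>i<N. pred_traj f x0 u i \<in> X \<and> u i \<in> U) \<and> pred_traj f x0 u N \<in> Xf"

definition ocp_cost :: "('s \<Rightarrow> 'i \<Rightarrow> 's) \<Rightarrow> ('s \<Rightarrow> 'i \<Rightarrow> real) \<Rightarrow> ('s \<Rightarrow> real) \<Rightarrow> nat
    \<Rightarrow> 's \<Rightarrow> (nat \<Rightarrow> 'i) \<Rightarrow> real" where
  "ocp_cost f l Vt N x0 u = (\<Sum>i<N. l (pred_traj f x0 u i) (u i)) + Vt (pred_traj f x0 u N)"

definition ocp_feasible :: "('s \<Rightarrow> 'i \<Rightarrow> 's) \<Rightarrow> 's set \<Rightarrow> 'i set \<Rightarrow> 's set \<Rightarrow> nat \<Rightarrow> 's \<Rightarrow> bool" where
  "ocp_feasible f X U Xf N x0 \<longleftrightarrow> (\<exists>u. ocp_feasible_seq f X U Xf N x0 u)"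

definition ocp_optimal :: "('s \<Rightarrow> 'i \<Rightarrow> 's) \<Rightarrow> ('s \<Rightarrow> 'i \<Rightarrow> real) \<Rightarrow> ('s \<Rightarrow> real)
    \<Rightarrow> 's set \<Rightarrow> 'i set \<Rightarrow> 's set \<Rightarrow> nat \<Rightarrow> 's \<Rightarrow> (nat \<Rightarrow> 'i) \<Rightarrow> bool" where
  "ocp_optimal f l Vt X U Xf N x0 u \<longleftrightarrow>
     ocp_feasible_seq f X U Xf N x0 u \<and>
     (\<forall>v. ocp_feasible_seq f X U Xf N x0 v \<longrightarrow> ocp_cost f l Vt N x0 u \<le> ocp_cost f l Vt N x0 v)"

definition P_feasible where
  "P_feasible fp g c b Xp Up Xfp N x0 =
     ocp_feasible (fsys fp g c b) (Xset Xp Up b) (Uset Up) (Xf_set Xfp Up c g b) N x0"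

definition P_optimal where
  "P_optimal fp g c b Xp Up Xfp Q R Vfp \<sigma> N x0 u =
     ocp_optimal (fsys fp g c b) (stage_cost Q R) (Vf Vfp \<sigma> b)
       (Xset Xp Up b) (Uset Up) (Xf_set Xfp Up c g b) N x0 u"

end

theory Submission
  imports Defs
begin

(* From every state of the terminal set, the terminal control law of the plant, sent once and then
   held for q steps (or, at the origin, sending nothing), is admissible and returns to the terminal
   set. Because q g > c, which is where the non-integrality of c/g enters, the bucket strictly gains
   tokens over such a block unless it is full, so V_f decreases by the stage costs plus sigma times
   the indicator of a non-full bucket. Concatenating r blocks gives an M-step continuation, and the
   usual shifted candidate yields recursive feasibility and a decrease of the optimal cost by the
   applied stage costs plus this deficit. Both are therefore summable: the stage costs tend to 0,
   which forces x_p, u_s -> 0, and eventually every optimal plan ends with a full bucket. At most g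
   tokens arrive per step, so i steps into such a plan the level is at least b - (N - i) g. *)

section \<open>Finite-horizon problems and descent tails\<close>

lemma sum_lessThan_add:
  "(\<Sum>i<K + L. h i) = (\<Sum>i<K. h i) + (\<Sum>i<L. h (K + i))" for h :: "nat \<Rightarrow> 'a::comm_monoid_add"
  by (induction L) (simp_all add: add.assoc)

lemma pred_traj_add:
  "pred_traj f z us (K + i) = pred_traj f (pred_traj f z us K) (\<lambda>i. us (K + i)) i"
  by (induction i) auto

lemma ocp_cost_add:
  "ocp_cost f l Vt (K + L) z us =
     (\<Sum>i<K. l (pred_traj f z us i) (us i)) + ocp_cost f l Vt L (pred_traj f z us K) (\<lambda>i. us (K + i))"
  by (simp add: ocp_cost_def sum_lessThan_add pred_traj_add)

lemma ocp_feasible_seq_add: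
  "ocp_feasible_seq f X U Xf (K + L) z us \<longleftrightarrow>
     (\<forall>i<K. pred_traj f z us i \<in> X \<and> us i \<in> U) \<and>
     ocp_feasible_seq f X U Xf L (pred_traj f z us K) (\<lambda>i. us (K + i))"
proof -
  have split: "(\<forall>i<K + L. P i) \<longleftrightarrow> (\<forall>i<K. P i) \<and> (\<forall>i<L. P (K + i))" for P
    by (metis add_diff_inverse_nat nat_add_left_cancel_less trans_less_add1)
  show ?thesis
    unfolding ocp_feasible_seq_def split by (simp add: pred_traj_add)
qed

definition append_inputs :: "nat \<Rightarrow> (nat \<Rightarrow> 'i) \<Rightarrow> (nat \<Rightarrow> 'i) \<Rightarrow> nat \<Rightarrow> 'i" where
  "append_inputs K t v i = (if i < K then t i else v (i - K))"

lemma pred_traj_append_inputs: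
  "i \<le> K \<Longrightarrow> pred_traj f z (append_inputs K t v) i = pred_traj f z t i"
  by (induction i) (auto simp: append_inputs_def)

lemma append_inputs_shift [simp]: "(\<lambda>i. append_inputs K t v (K + i)) = v"
  by (simp add: append_inputs_def)

definition descent_tail :: "('s \<Rightarrow> 'i \<Rightarrow> 's) \<Rightarrow> 's set \<Rightarrow> 'i set \<Rightarrow> 's set \<Rightarrow> ('s \<Rightarrow> 'i \<Rightarrow> real)
    \<Rightarrow> ('s \<Rightarrow> real) \<Rightarrow> nat \<Rightarrow> 's \<Rightarrow> (nat \<Rightarrow> 'i) \<Rightarrow> real \<Rightarrow> bool" where
  "descent_tail f X U Xf l Vt K z t e \<longleftrightarrow>
     ocp_feasible_seq f X U Xf K z t \<and> ocp_cost f l Vt K z t \<le> Vt z - e"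

lemma descent_tail_append:
  assumes t: "descent_tail f X U Xf l Vt K z t e"
    and v: "descent_tail f X U Xf l Vt L (pred_traj f z t K) v e'"
  shows "descent_tail f X U Xf l Vt (K + L) z (append_inputs K t v) (e + e')"
proof -
  let ?w = "append_inputs K t v"
  have head: "pred_traj f z ?w i = pred_traj f z t i" "?w i = t i" if "i < K" for i
    using that by (simp_all add: pred_traj_append_inputs append_inputs_def)
  have mid: "pred_traj f z ?w K = pred_traj f z t K"
    by (simp add: pred_traj_append_inputs)
  have "(\<Sum>i<K. l (pred_traj f z ?w i) (?w i)) = (\<Sum>i<K. l (pred_traj f z t i) (t i))"
    by (rule sum.cong) (simp_all add: head)
  then have "ocp_cost f l Vt (K + L) z ?w = ocp_cost f l Vt K z t - Vt (pred_traj f z t K)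
      + ocp_cost f l Vt L (pred_traj f z t K) v"
    unfolding ocp_cost_add by (simp add: mid ocp_cost_def)
  moreover have "ocp_feasible_seq f X U Xf (K + L) z ?w"
    using t v unfolding ocp_feasible_seq_add descent_tail_def
    by (simp add: head mid) (simp add: ocp_feasible_seq_def)
  ultimately show ?thesis
    using t v unfolding descent_tail_def by simp
qed

lemma descent_tail_terminal:
  "descent_tail f X U Xf l Vt K z t e \<Longrightarrow> pred_traj f z t K \<in> Xf"
  by (simp add: descent_tail_def ocp_feasible_seq_def)

lemma descent_tail_repeat:
  assumes tail: "\<And>z. z \<in> Xf \<Longrightarrow> \<exists>t. descent_tail f X U Xf l Vt K z t (d z)"
    and d_nonneg: "\<And>z. 0 \<le> d z" and "0 < n" and "z \<in> Xf"
  shows "\<exists>t. descent_tail f X U Xf l Vt (n * K) z t (d z)"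
  using \<open>0 < n\<close> \<open>z \<in> Xf\<close>
proof (induction n arbitrary: z rule: nat_induct_non_zero)
  case 1
  then show ?case using tail by simp
next
  case (Suc n)
  obtain t where t: "descent_tail f X U Xf l Vt K z t (d z)"
    using tail Suc.prems by blast
  obtain v where v: "descent_tail f X U Xf l Vt (n * K) (pred_traj f z t K) v (d (pred_traj f z t K))"
    using Suc.IH descent_tail_terminal[OF t] by blast
  have "descent_tail f X U Xf l Vt (Suc n * K) z (append_inputs K t v) (d z + d (pred_traj f z t K))"
    using descent_tail_append[OF t v] by simp
  then have "descent_tail f X U Xf l Vt (Suc n * K) z (append_inputs K t v) (d z)"
    using d_nonneg[of "pred_traj f z t K"] unfolding descent_tail_def by linarith
  then show ?case by blast
qed

lemma shifted_candidate:
  assumes us: "ocp_feasible_seq f X U Xf N x0 us" and "M \<le> N"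
    and t: "descent_tail f X U Xf l Vt M (pred_traj f x0 us N) t e"
  defines "w \<equiv> append_inputs (N - M) (\<lambda>i. us (M + i)) t"
  shows "ocp_feasible_seq f X U Xf N (pred_traj f x0 us M) w"
    and "ocp_cost f l Vt N (pred_traj f x0 us M) w
      \<le> ocp_cost f l Vt N x0 us - (\<Sum>i<M. l (pred_traj f x0 us i) (us i)) - e"
proof -
  let ?y = "pred_traj f x0 us M" and ?v = "\<lambda>i. us (M + i)"
  have N: "N = M + (N - M)" using \<open>M \<le> N\<close> by simp
  have "ocp_feasible_seq f X U Xf (N - M) ?y ?v"
    using us N ocp_feasible_seq_add by metis
  \<comment> \<open>A feasible sequence is a descent tail with whatever margin it achieves.\<close>
  then have v: "descent_tail f X U Xf l Vt (N - M) ?y ?v (Vt ?y - ocp_cost f l Vt (N - M) ?y ?v)"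
    by (simp add: descent_tail_def)
  have "pred_traj f ?y ?v (N - M) = pred_traj f x0 us N"
    using N pred_traj_add by metis
  then have "descent_tail f X U Xf l Vt (N - M + M) ?y w (Vt ?y - ocp_cost f l Vt (N - M) ?y ?v + e)"
    unfolding w_def using descent_tail_append[OF v] t by simp
  moreover have "ocp_cost f l Vt N x0 us
      = (\<Sum>i<M. l (pred_traj f x0 us i) (us i)) + ocp_cost f l Vt (N - M) ?y ?v"
    using N ocp_cost_add by metis
  ultimately show "ocp_feasible_seq f X U Xf N ?y w"
    and "ocp_cost f l Vt N ?y w \<le> ocp_cost f l Vt N x0 us - (\<Sum>i<M. l (pred_traj f x0 us i) (us i)) - e"
    using \<open>M \<le> N\<close> by (simp_all add: descent_tail_def)
qed


section \<open>Rollout model predictive control\<close>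

locale rollout_mpc =
  fixes f :: "'s \<Rightarrow> 'i \<Rightarrow> 's" and X :: "'s set" and U :: "'i set" and Xf :: "'s set"
    and l :: "'s \<Rightarrow> 'i \<Rightarrow> real" and Vt :: "'s \<Rightarrow> real" and N M :: nat and d :: "'s \<Rightarrow> real"
    and x :: "nat \<Rightarrow> 's" and u :: "nat \<Rightarrow> 'i"
  assumes M_pos: "0 < M" and M_le_N: "M \<le> N"
    and l_nonneg: "\<And>y v. y \<in> X \<Longrightarrow> v \<in> U \<Longrightarrow> 0 \<le> l y v"
    and Vt_nonneg: "\<And>z. z \<in> Xf \<Longrightarrow> 0 \<le> Vt z"
    and d_nonneg: "\<And>z. 0 \<le> d z"
    and terminal_descent: "\<And>z. z \<in> Xf \<Longrightarrow> \<exists>t. descent_tail f X U Xf l Vt M z t (d z)"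
    and closed_loop: "\<And>k. x (Suc k) = f (x k) (u k)"
    and rollout: "\<And>j. ocp_feasible f X U Xf N (x (j * M)) \<Longrightarrow>
      \<exists>us. ocp_optimal f l Vt X U Xf N (x (j * M)) us \<and> (\<forall>i<M. u (j * M + i) = us i)"
    and initially_feasible: "ocp_feasible f X U Xf N (x 0)"
begin

text \<open>The optimizer computed at time \<open>j M\<close>; the choice is meaningful only when that problem is
  feasible, which \<open>recursive_feasibility\<close> below establishes for every \<open>j\<close>.\<close>
definition plan :: "nat \<Rightarrow> nat \<Rightarrow> 'i" where
  "plan j = (SOME us. ocp_optimal f l Vt X U Xf N (x (j * M)) us \<and> (\<forall>i<M. u (j * M + i) = us i))"

definition opt_cost :: "nat \<Rightarrow> real" where
  "opt_cost j = ocp_cost f l Vt N (x (j * M)) (plan j)"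

definition planned_terminal :: "nat \<Rightarrow> 's" where
  "planned_terminal j = pred_traj f (x (j * M)) (plan j) N"

lemma plan_spec:
  assumes "ocp_feasible f X U Xf N (x (j * M))"
  shows "ocp_optimal f l Vt X U Xf N (x (j * M)) (plan j)" and "\<And>i. i < M \<Longrightarrow> u (j * M + i) = plan j i"
  using someI_ex[OF rollout[OF assms]] unfolding plan_def by blast+

lemma closed_loop_follows_plan_if_feasible:
  assumes "ocp_feasible f X U Xf N (x (j * M))" and "i \<le> M"
  shows "x (j * M + i) = pred_traj f (x (j * M)) (plan j) i"
  using \<open>i \<le> M\<close> by (induction i) (simp_all add: closed_loop plan_spec(2)[OF assms(1)])

lemma successor_candidate:
  assumes feasible: "ocp_feasible f X U Xf N (x (j * M))"
  shows "\<exists>w. ocp_feasible_seq f X U Xf N (x (Suc j * M)) w \<and>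
    ocp_cost f l Vt N (x (Suc j * M)) w
      \<le> opt_cost j - (\<Sum>i<M. l (x (j * M + i)) (u (j * M + i))) - d (planned_terminal j)"
proof -
  have plan: "ocp_feasible_seq f X U Xf N (x (j * M)) (plan j)"
    using plan_spec(1)[OF feasible] by (simp add: ocp_optimal_def)
  then obtain t where t: "descent_tail f X U Xf l Vt M (planned_terminal j) t (d (planned_terminal j))"
    using terminal_descent by (auto simp: planned_terminal_def ocp_feasible_seq_def)
  have "x (Suc j * M) = pred_traj f (x (j * M)) (plan j) M"
    using closed_loop_follows_plan_if_feasible[OF feasible, of M] by (simp add: add.commute)
  moreover have "(\<Sum>i<M. l (pred_traj f (x (j * M)) (plan j) i) (plan j i))
      = (\<Sum>i<M. l (x (j * M + i)) (u (j * M + i)))"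
    by (rule sum.cong)
      (simp_all add: closed_loop_follows_plan_if_feasible[OF feasible] plan_spec(2)[OF feasible])
  ultimately show ?thesis
    using shifted_candidate[OF plan M_le_N t[unfolded planned_terminal_def]]
    unfolding opt_cost_def planned_terminal_def by (metis (no_types, lifting))
qed

theorem recursive_feasibility: "ocp_feasible f X U Xf N (x (j * M))"
proof (induction j)
  case 0
  then show ?case using initially_feasible by simp
next
  case (Suc j)
  then show ?case using successor_candidate by (auto simp: ocp_feasible_def)
qed

lemma plan_optimal: "ocp_optimal f l Vt X U Xf N (x (j * M)) (plan j)"
  and plan_applied: "i < M \<Longrightarrow> u (j * M + i) = plan j i"
  using plan_spec[OF recursive_feasibility] by blast+

lemma closed_loop_follows_plan: "i \<le> M \<Longrightarrow> x (j * M + i) = pred_traj f (x (j * M)) (plan j) i"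
  using closed_loop_follows_plan_if_feasible[OF recursive_feasibility] .

lemma opt_cost_decrease:
  "opt_cost (Suc j) \<le> opt_cost j - (\<Sum>i<M. l (x (j * M + i)) (u (j * M + i))) - d (planned_terminal j)"
proof -
  obtain w where w: "ocp_feasible_seq f X U Xf N (x (Suc j * M)) w"
    "ocp_cost f l Vt N (x (Suc j * M)) w
      \<le> opt_cost j - (\<Sum>i<M. l (x (j * M + i)) (u (j * M + i))) - d (planned_terminal j)"
    using successor_candidate[OF recursive_feasibility] by blast
  have "opt_cost (Suc j) \<le> ocp_cost f l Vt N (x (Suc j * M)) w"
    using plan_optimal[of "Suc j"] w(1) unfolding opt_cost_def ocp_optimal_def by blast
  with w(2) show ?thesis by linarith
qed

lemma closed_loop_eq_plan:
  "x k = pred_traj f (x (k div M * M)) (plan (k div M)) (k mod M)"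
  using closed_loop_follows_plan[of "k mod M" "k div M"] M_pos by simp

lemma closed_loop_admissible: "x k \<in> X \<and> u k \<in> U"
proof -
  let ?j = "k div M" and ?i = "k mod M"
  have i: "?i < M" using M_pos by simp
  then have "pred_traj f (x (?j * M)) (plan ?j) ?i \<in> X \<and> plan ?j ?i \<in> U"
    using plan_optimal[of ?j] M_le_N by (simp add: ocp_optimal_def ocp_feasible_seq_def)
  then show ?thesis
    using closed_loop_eq_plan[of k] plan_applied[OF i, of ?j] by simp
qed

lemma opt_cost_nonneg: "0 \<le> opt_cost j"
proof -
  have "ocp_feasible_seq f X U Xf N (x (j * M)) (plan j)"
    using plan_optimal by (simp add: ocp_optimal_def)
  then show ?thesis
    unfolding opt_cost_def ocp_cost_def ocp_feasible_seq_def
    by (intro add_nonneg_nonneg sum_nonneg l_nonneg Vt_nonneg) auto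
qed

lemma accumulated_cost_le:
  "(\<Sum>k<j * M. l (x k) (u k)) + (\<Sum>i<j. d (planned_terminal i)) \<le> opt_cost 0 - opt_cost j"
proof (induction j)
  case 0
  then show ?case by simp
next
  case (Suc j)
  have "Suc j * M = j * M + M" by simp
  then have "(\<Sum>k<Suc j * M. l (x k) (u k))
      = (\<Sum>k<j * M. l (x k) (u k)) + (\<Sum>i<M. l (x (j * M + i)) (u (j * M + i)))"
    by (simp only: sum_lessThan_add)
  then show ?case using Suc.IH opt_cost_decrease[of j] by simp
qed

lemma summable_stage_cost: "summable (\<lambda>k. l (x k) (u k))"
proof (rule summableI_nonneg_bounded)
  show nonneg: "0 \<le> l (x k) (u k)" for k
    using closed_loop_admissible l_nonneg by blast
  fix n
  have "(\<Sum>k<n. l (x k) (u k)) \<le> (\<Sum>k<n * M. l (x k) (u k))"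
    using M_pos nonneg by (intro sum_mono2) auto
  moreover have "0 \<le> (\<Sum>i<n. d (planned_terminal i))"
    by (simp add: d_nonneg sum_nonneg)
  ultimately show "(\<Sum>k<n. l (x k) (u k)) \<le> opt_cost 0"
    using accumulated_cost_le[of n] opt_cost_nonneg[of n] by linarith
qed

lemma summable_margin: "summable (\<lambda>j. d (planned_terminal j))"
proof (rule summableI_nonneg_bounded)
  show "0 \<le> d (planned_terminal j)" for j
    by (rule d_nonneg)
  fix n
  have "0 \<le> (\<Sum>k<n * M. l (x k) (u k))"
    using closed_loop_admissible l_nonneg by (simp add: sum_nonneg)
  then show "(\<Sum>j<n. d (planned_terminal j)) \<le> opt_cost 0"
    using accumulated_cost_le[of n] opt_cost_nonneg[of n] by linarith
qed

end


section \<open>Positive definite quadratic forms\<close>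

lemma qf_zero [simp]: "qf A 0 = 0"
  by (simp add: qf_def)

lemma qf_nonneg: "pos_def_mat A \<Longrightarrow> 0 \<le> qf A v"
  unfolding pos_def_mat_def by (cases "v = 0") (auto simp: qf_def less_imp_le)

lemma qf_scaleR: "qf A (a *\<^sub>R v) = a\<^sup>2 * qf A v"
  by (simp add: qf_def matrix_vector_mult_scaleR power2_eq_square)

lemma pos_def_mat_qf_lower_bound:
  fixes A :: "real^'k^'k"
  assumes "pos_def_mat A"
  obtains m where "0 < m" "\<And>v. m * (norm v)\<^sup>2 \<le> qf A v"
proof -
  have "continuous_on (sphere 0 1) (qf A)"
    unfolding qf_def by (intro continuous_intros)
  moreover have "sphere (0::real^'k) 1 \<noteq> {}"
    by simp
  ultimately obtain v0 where v0: "v0 \<in> sphere 0 1" "\<And>w. w \<in> sphere 0 1 \<Longrightarrow> qf A v0 \<le> qf A w"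
    using continuous_attains_inf[OF compact_sphere] by metis
  have "qf A v0 * (norm v)\<^sup>2 \<le> qf A v" for v
  proof (cases "v = 0")
    case False
    then have "qf A v = qf A (norm v *\<^sub>R (v /\<^sub>R norm v))"
      by simp
    also have "\<dots> = (norm v)\<^sup>2 * qf A (v /\<^sub>R norm v)"
      by (rule qf_scaleR)
    also have "\<dots> \<ge> (norm v)\<^sup>2 * qf A v0"
      using False v0(2)[of "v /\<^sub>R norm v"] by (simp add: mult_left_mono)
    finally show ?thesis by (simp add: mult.commute)
  qed (simp add: qf_def)
  moreover have "0 < qf A v0"
    using assms v0(1) unfolding pos_def_mat_def by (metis norm_zero mem_sphere_0 zero_neq_one)
  ultimately show ?thesis using that by blast
qed

lemma pos_def_mat_tendsto_zero:
  fixes A :: "real^'k^'k"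
  assumes "pos_def_mat A" and "(\<lambda>k. qf A (v k)) \<longlonglongrightarrow> 0"
  shows "v \<longlonglongrightarrow> 0"
proof -
  obtain m where m: "0 < m" "\<And>w. m * (norm w)\<^sup>2 \<le> qf A w"
    using pos_def_mat_qf_lower_bound[OF assms(1)] by blast
  have "norm (v k) \<le> sqrt (qf A (v k) / m)" for k
    using m by (intro real_le_rsqrt) (simp add: pos_le_divide_eq mult.commute)
  then have "\<forall>\<^sub>F k in sequentially. norm (v k) \<le> sqrt (qf A (v k) / m)"
    by simp
  moreover have "(\<lambda>k. sqrt (qf A (v k) / m)) \<longlonglongrightarrow> 0"
    using tendsto_real_sqrt[OF tendsto_divide_zero[OF assms(2)]] by simp
  ultimately show ?thesis
    by (rule Lim_null_comparison)
qed


section \<open>The token-bucket system\<close>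

lemma fsys_hold: "fsys fp g c b (xp, us, \<beta>) (uc, 0) = (fp xp us, us, min (\<beta> + g) b)"
  by (simp add: fsys_def)

lemma min_add_min: "0 \<le> g \<Longrightarrow> min (min a b + g) b = min (a + g) (b::int)"
  by (simp add: min_def)

lemma pred_traj_fsys_idle:
  assumes "fp 0 0 = 0" "0 \<le> g" "\<beta> \<le> b"
  shows "pred_traj (fsys fp g c b) (0, 0, \<beta>) (\<lambda>_. (0, 0)) i = (0, 0, min (\<beta> + int i * g) b)"
  by (induction i) (use assms in \<open>simp_all add: fsys_hold min_add_min distrib_right add.assoc\<close>)

lemma pred_traj_fsys_send_hold:
  assumes "0 \<le> g"
  shows "pred_traj (fsys fp g c b) (xp, us, \<beta>) (\<lambda>i. (k, if i = 0 then 1 else 0)) (Suc i)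
    = (fpi fp (Suc i) xp k, k, min (\<beta> + int (Suc i) * g - c) b)"
proof (induction i)
  case 0
  then show ?case by (simp add: fsys_def Let_def fpi_def)
next
  case (Suc i)
  have "min (min (\<beta> + int (Suc i) * g - c) b + g) b = min (\<beta> + int (Suc (Suc i)) * g - c) b"
    using assms by (simp add: min_add_min distrib_right algebra_simps)
  with Suc show ?case
    by (simp add: fsys_hold fpi_def del: of_nat_Suc)
qed

lemma token_level_le_add:
  assumes "0 \<le> c" and "i \<le> n"
  shows "snd (snd (pred_traj (fsys fp g c b) y w n))
    \<le> snd (snd (pred_traj (fsys fp g c b) y w i)) + int (n - i) * g"
  using \<open>i \<le> n\<close>
proof (induction n rule: dec_induct)
  case (step n)
  obtain xp us \<beta> where z: "pred_traj (fsys fp g c b) y w n = (xp, us, \<beta>)"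
    by (metis prod_cases3)
  obtain uc \<gamma> where v: "w n = (uc, \<gamma>)"
    by fastforce
  have "snd (snd (pred_traj (fsys fp g c b) y w (Suc n))) = min (\<beta> + g - int \<gamma> * c) b"
    using z v by (simp add: fsys_def Let_def)
  also have "\<dots> \<le> \<beta> + g"
    using \<open>0 \<le> c\<close> by (simp add: min.coboundedI1)
  finally show ?case
    using step.IH z \<open>i \<le> n\<close> by (simp add: Suc_diff_le distrib_right)
qed simp

lemma stage_cost_ge_state:
  "pos_def_mat R \<Longrightarrow> v \<in> Uset Up \<Longrightarrow> qf Q (fst y) \<le> stage_cost Q R y v"
  by (cases y; cases v) (auto simp: stage_cost_def Uset_def qf_nonneg)

lemma stage_cost_ge_applied_input:
  "pos_def_mat Q \<Longrightarrow> v \<in> Uset Up \<Longrightarrow> qf R (fst (snd (fsys fp g c b y v))) \<le> stage_cost Q R y v"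
  by (cases y; cases v) (auto simp: stage_cost_def fsys_def Uset_def qf_nonneg)

lemma stage_cost_nonneg:
  "pos_def_mat Q \<Longrightarrow> pos_def_mat R \<Longrightarrow> v \<in> Uset Up \<Longrightarrow> 0 \<le> stage_cost Q R y v"
  using stage_cost_ge_state qf_nonneg order_trans by blast

lemma Vf_nonneg:
  assumes "\<And>xp. xp \<in> Xfp \<Longrightarrow> 0 \<le> Vfp xp" "0 \<in> Xfp" "0 \<le> g" "g \<le> c" "c \<le> b" "0 \<le> \<sigma>"
    and "z \<in> Xf_set Xfp Up c g b"
  shows "0 \<le> Vf Vfp \<sigma> b z"
proof -
  have "fst z \<in> Xfp" "0 \<le> snd (snd z)" "snd (snd z) \<le> b"
    using assms by (auto simp: Xf_set_def)
  then have "0 \<le> Vfp (fst z)" "(real_of_int (snd (snd z)))\<^sup>2 \<le> (real_of_int b)\<^sup>2"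
    using assms(1) by (auto intro: power_mono)
  then show ?thesis
    using assms(6) by (simp add: Vf_def)
qed

definition token_deficit :: "real \<Rightarrow> int \<Rightarrow> 'a \<times> 'b \<times> int \<Rightarrow> real" where
  "token_deficit \<sigma> b z = (if snd (snd z) < b then \<sigma> else 0)"

lemma token_cost_gain:
  fixes \<beta> \<beta>' b :: int
  assumes "0 \<le> \<beta>" "\<beta> \<le> \<beta>'" "\<beta> < b \<Longrightarrow> \<beta> < \<beta>'" "0 \<le> \<sigma>"
  shows "\<sigma> * ((real_of_int b)\<^sup>2 - (real_of_int \<beta>')\<^sup>2)
    \<le> \<sigma> * ((real_of_int b)\<^sup>2 - (real_of_int \<beta>)\<^sup>2) - (if \<beta> < b then \<sigma> else 0)"
proof -
  have "(if \<beta> < b then 1 else 0) \<le> \<beta>'\<^sup>2 - \<beta>\<^sup>2"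
  proof (cases "\<beta> < b")
    case True
    then have "(\<beta> + 1)\<^sup>2 \<le> \<beta>'\<^sup>2"
      using assms by (intro power_mono) auto
    with True assms(1) show ?thesis by (simp add: power2_eq_square algebra_simps)
  qed (use assms power_mono in auto)
  then have "(if \<beta> < b then 1 else 0) \<le> (real_of_int \<beta>')\<^sup>2 - (real_of_int \<beta>)\<^sup>2"
    by (metis (mono_tags) of_int_0 of_int_1 of_int_diff of_int_le_iff of_int_power)
  from mult_left_mono[OF this assms(4)] show ?thesis
    by (simp add: algebra_simps split: if_splits)
qed

lemma idle_descent_tail:
  assumes fp0: "fp 0 0 = 0" and zero: "0 \<in> Xp" "0 \<in> Up" "0 \<in> Xfp" "Vfp 0 = 0"
    and g: "0 \<le> g" and qg: "c < int q * g" and cb: "c \<le> b" and \<sigma>: "0 \<le> \<sigma>"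
    and \<beta>: "0 \<le> \<beta>" "\<beta> \<le> c - g - 1"
  shows "descent_tail (fsys fp g c b) (Xset Xp Up b) (Uset Up) (Xf_set Xfp Up c g b)
    (stage_cost Q R) (Vf Vfp \<sigma> b) q (0, 0, \<beta>) (\<lambda>_. (0, 0)) (token_deficit \<sigma> b (0, 0, \<beta>))"
proof -
  define \<beta>' where "\<beta>' i = min (\<beta> + int i * g) b" for i
  have traj: "pred_traj (fsys fp g c b) (0, 0, \<beta>) (\<lambda>_. (0, 0)) i = (0, 0, \<beta>' i)" for i
    unfolding \<beta>'_def using \<beta> g cb by (simp add: pred_traj_fsys_idle fp0)
  have \<beta>'_bounds: "0 \<le> \<beta>' i" "\<beta>' i \<le> b" for i
    using \<beta> g cb unfolding \<beta>'_def by auto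
  have \<beta>'_q: "c - g \<le> \<beta>' q" "\<beta> \<le> \<beta>' q" "\<beta> < b \<Longrightarrow> \<beta> < \<beta>' q"
    using \<beta> g qg cb unfolding \<beta>'_def by auto
  have "ocp_feasible_seq (fsys fp g c b) (Xset Xp Up b) (Uset Up) (Xf_set Xfp Up c g b) q (0, 0, \<beta>) (\<lambda>_. (0, 0))"
    unfolding ocp_feasible_seq_def traj Xset_def Uset_def Xf_set_def
    using zero \<beta>'_bounds \<beta>'_q by auto
  moreover have "ocp_cost (fsys fp g c b) (stage_cost Q R) (Vf Vfp \<sigma> b) q (0, 0, \<beta>) (\<lambda>_. (0, 0))
      = \<sigma> * ((real_of_int b)\<^sup>2 - (real_of_int (\<beta>' q))\<^sup>2)"
    by (simp add: ocp_cost_def traj stage_cost_def Vf_def zero)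
  ultimately show ?thesis
    using token_cost_gain[where b = b, OF \<beta>(1) \<beta>'_q(2,3) \<sigma>]
    by (simp add: descent_tail_def token_deficit_def Vf_def zero)
qed

lemma send_hold_descent_tail:
  assumes xp: "xp \<in> Xfp" and us: "us \<in> Up" and k: "k \<in> Up" and \<beta>: "c - g \<le> \<beta>" "\<beta> \<le> b"
    and g: "0 \<le> g" "g \<le> c" and q: "0 < q" "c < int q * g" and \<sigma>: "0 \<le> \<sigma>"
    and Xfp: "Xfp \<subseteq> Xp" and intermediate: "\<forall>i\<in>{1..q-1}. fpi fp i xp k \<in> Xp"
    and terminal: "fpi fp q xp k \<in> Xfp"
    and decrease: "Vfp (fpi fp q xp k) - Vfp xp \<le> - real q * qf R k - (\<Sum>i<q. qf Q (fpi fp i xp k))"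
  shows "descent_tail (fsys fp g c b) (Xset Xp Up b) (Uset Up) (Xf_set Xfp Up c g b)
    (stage_cost Q R) (Vf Vfp \<sigma> b) q (xp, us, \<beta>) (\<lambda>i. (k, if i = 0 then 1 else 0))
    (token_deficit \<sigma> b (xp, us, \<beta>))"
proof -
  let ?t = "\<lambda>i::nat. (k, if i = 0 then 1 else 0::nat)"
  define \<beta>' where "\<beta>' i = (if i = 0 then \<beta> else min (\<beta> + int i * g - c) b)" for i
  have traj: "pred_traj (fsys fp g c b) (xp, us, \<beta>) ?t i
      = (fpi fp i xp k, if i = 0 then us else k, \<beta>' i)" for i
  proof (cases i)
    case (Suc j)
    then show ?thesis
      using pred_traj_fsys_send_hold[OF g(1)]
      by (simp add: \<beta>'_def del: pred_traj.simps of_nat_Suc)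
  qed (simp add: \<beta>'_def fpi_def)
  have \<beta>'_bounds: "0 \<le> \<beta>' i" "\<beta>' i \<le> b" for i
  proof -
    have "0 < i \<Longrightarrow> g \<le> int i * g"
      using g mult_right_mono[of 1 "int i" g] by simp
    then show "0 \<le> \<beta>' i" "\<beta>' i \<le> b"
      using \<beta> g unfolding \<beta>'_def by auto
  qed
  have \<beta>'_q: "c - g \<le> \<beta>' q" "\<beta> \<le> \<beta>' q" "\<beta> < b \<Longrightarrow> \<beta> < \<beta>' q"
    using \<beta> g q unfolding \<beta>'_def by auto
  have "fpi fp i xp k \<in> Xp" if "i < q" for i
  proof (cases "i = 0")
    case True
    then show ?thesis using xp Xfp by (auto simp: fpi_def)
  next
    case False
    then show ?thesis using that intermediate by simp
  qed
  then have "ocp_feasible_seq (fsys fp g c b) (Xset Xp Up b) (Uset Up) (Xf_set Xfp Up c g b) q (xp, us, \<beta>) ?t"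
    unfolding ocp_feasible_seq_def traj Xset_def Uset_def Xf_set_def
    using us k terminal \<beta>'_bounds \<beta>'_q by auto
  moreover have "stage_cost Q R (pred_traj (fsys fp g c b) (xp, us, \<beta>) ?t i) (?t i)
      = qf Q (fpi fp i xp k) + qf R k" for i
    by (simp add: traj stage_cost_def)
  then have "ocp_cost (fsys fp g c b) (stage_cost Q R) (Vf Vfp \<sigma> b) q (xp, us, \<beta>) ?t
      = (\<Sum>i<q. qf Q (fpi fp i xp k)) + real q * qf R k
        + Vfp (fpi fp q xp k) + \<sigma> * ((real_of_int b)\<^sup>2 - (real_of_int (\<beta>' q))\<^sup>2)"
    using q by (simp add: ocp_cost_def traj Vf_def sum.distrib)
  ultimately show ?thesis
    using token_cost_gain[where b = b, OF _ \<beta>'_q(2,3) \<sigma>] \<beta> g decrease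
    by (simp add: descent_tail_def token_deficit_def Vf_def)
qed

lemma token_bucket_descent_tail:
  assumes fp0: "fp 0 0 = 0" and zero: "0 \<in> Xp" "0 \<in> Up" "0 \<in> Xfp" "Vfp 0 = 0"
    and gcb: "0 \<le> g" "g \<le> c" "c \<le> b" and q: "0 < q" "c < int q * g" and \<sigma>: "0 \<le> \<sigma>"
    and Xfp: "Xfp \<subseteq> Xp" and kp: "\<forall>xp\<in>Xfp. kp xp \<in> Up"
    and invariance: "\<forall>xp\<in>Xfp. (\<forall>i\<in>{1..q-1}. fpi fp i xp (kp xp) \<in> Xp) \<and> fpi fp q xp (kp xp) \<in> Xfp"
    and decrease: "\<forall>xp\<in>Xfp. Vfp (fpi fp q xp (kp xp)) - Vfp xp
      \<le> - real q * qf R (kp xp) - (\<Sum>i<q. qf Q (fpi fp i xp (kp xp)))"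
    and z: "z \<in> Xf_set Xfp Up c g b"
  shows "\<exists>t. descent_tail (fsys fp g c b) (Xset Xp Up b) (Uset Up) (Xf_set Xfp Up c g b)
    (stage_cost Q R) (Vf Vfp \<sigma> b) q z t (token_deficit \<sigma> b z)"
proof -
  obtain xp us \<beta> where z_eq: "z = (xp, us, \<beta>)"
    by (metis prod_cases3)
  consider "xp = 0" "us = 0" "0 \<le> \<beta>" "\<beta> \<le> c - g - 1" | "xp \<in> Xfp" "us \<in> Up" "c - g \<le> \<beta>" "\<beta> \<le> b"
    using z unfolding z_eq Xf_set_def by auto
  then show ?thesis
  proof cases
    case 1
    then show ?thesis
      using idle_descent_tail[where fp = fp and Vfp = Vfp, OF fp0 zero gcb(1) q(2) gcb(3) \<sigma>] z_eq by blast
  next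
    case 2
    then show ?thesis
      using send_hold_descent_tail[OF 2(1,2) _ 2(3,4) gcb(1,2) q \<sigma> Xfp] kp invariance decrease z_eq
      by blast
  qed
qed

lemma ceiling_quotient_gt:
  fixes c g :: int
  assumes "0 < g" "0 < c" "real_of_int c / real_of_int g \<notin> \<int>"
  shows "0 < nat \<lceil>real_of_int c / real_of_int g\<rceil>"
    and "c < int (nat \<lceil>real_of_int c / real_of_int g\<rceil>) * g"
proof -
  let ?r = "real_of_int c / real_of_int g"
  have "?r < of_int \<lceil>?r\<rceil>"
    using assms(3) le_of_int_ceiling[of ?r] by (metis Ints_of_int order_le_less)
  moreover have "0 < ?r"
    using assms(1,2) by simp
  ultimately have "0 < \<lceil>?r\<rceil>" "real_of_int c < of_int \<lceil>?r\<rceil> * real_of_int g"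
    using assms(1) by (auto simp: divide_less_eq)
  then have "0 < \<lceil>?r\<rceil>" "c < \<lceil>?r\<rceil> * g"
    by (metis of_int_less_iff of_int_mult)+
  then show "0 < nat \<lceil>?r\<rceil>" "c < int (nat \<lceil>?r\<rceil>) * g"
    by simp_all
qed

lemma token_bucket_rollout_mpc:
  assumes fp0: "fp 0 0 = 0" and zero: "0 \<in> Xp" "0 \<in> Up" and QR: "pos_def_mat Q" "pos_def_mat R"
    and gcb: "0 < g" "g \<le> c" "c \<le> b" and q: "0 < q" "c < int q * g"
    and A1: "Xfp \<subseteq> Xp" "0 \<in> Xfp" "\<forall>xp\<in>Xfp. kp xp \<in> Up"
      "\<forall>xp\<in>Xfp. (\<forall>i\<in>{1..q-1}. fpi fp i xp (kp xp) \<in> Xp) \<and> fpi fp q xp (kp xp) \<in> Xfp"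
    and A2: "Vfp 0 = 0" "\<forall>xp\<in>Xfp. xp \<noteq> 0 \<longrightarrow> Vfp xp > 0"
      "\<forall>xp\<in>Xfp. Vfp (fpi fp q xp (kp xp)) - Vfp xp
          \<le> - real q * qf R (kp xp) - (\<Sum>i<q. qf Q (fpi fp i xp (kp xp)))"
    and \<sigma>: "0 < \<sigma>" and rMN: "0 < r" "M = r * q" "M \<le> N"
    and dyn: "\<forall>k. x (Suc k) = fsys fp g c b (x k) (u k)"
    and rollout: "\<forall>j. P_feasible fp g c b Xp Up Xfp N (x (j * M)) \<longrightarrow>
        (\<exists>us. P_optimal fp g c b Xp Up Xfp Q R Vfp \<sigma> N (x (j * M)) us
              \<and> (\<forall>i<M. u (j * M + i) = us i))"
    and init: "P_feasible fp g c b Xp Up Xfp N (x 0)"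
  shows "rollout_mpc (fsys fp g c b) (Xset Xp Up b) (Uset Up) (Xf_set Xfp Up c g b)
    (stage_cost Q R) (Vf Vfp \<sigma> b) N M (token_deficit \<sigma> b) x u"
proof unfold_locales
  show "0 < M" "M \<le> N"
    using q rMN by simp_all
  show "0 \<le> stage_cost Q R y v" if "v \<in> Uset Up" for y v
    by (rule stage_cost_nonneg[OF QR that])
  have "0 \<le> Vfp xp" if "xp \<in> Xfp" for xp
    using that A2(1,2) by (cases "xp = 0") (auto intro: less_imp_le)
  then show "0 \<le> Vf Vfp \<sigma> b z" if "z \<in> Xf_set Xfp Up c g b" for z
    using Vf_nonneg[OF _ A1(2) _ gcb(2,3) _ that] gcb(1) \<sigma> by simp
  show nonneg: "0 \<le> token_deficit \<sigma> b z" for z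
    using \<sigma> by (simp add: token_deficit_def)
  show "\<exists>t. descent_tail (fsys fp g c b) (Xset Xp Up b) (Uset Up) (Xf_set Xfp Up c g b)
      (stage_cost Q R) (Vf Vfp \<sigma> b) M z t (token_deficit \<sigma> b z)"
    if "z \<in> Xf_set Xfp Up c g b" for z
    unfolding rMN(2)
    using token_bucket_descent_tail[where fp = fp and Vfp = Vfp, OF fp0 zero A1(2) A2(1)
        _ gcb(2,3) q _ A1(1,3,4) A2(3)] gcb(1) \<sigma>
    by (intro descent_tail_repeat[OF _ nonneg rMN(1) that]) auto
qed (use dyn rollout init in \<open>simp_all add: P_feasible_def P_optimal_def\<close>)


section \<open>Convergence of the closed loop\<close>

lemma plant_converges:
  assumes "rollout_mpc (fsys fp g c b) X (Uset Up) Xf (stage_cost Q R) Vt N M d x u"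
    and Q: "pos_def_mat Q" and R: "pos_def_mat R"
  shows "(\<lambda>k. fst (x k)) \<longlonglongrightarrow> 0" and "(\<lambda>k. fst (snd (x k))) \<longlonglongrightarrow> 0"
proof -
  interpret rollout_mpc "fsys fp g c b" X "Uset Up" Xf "stage_cost Q R" Vt N M d x u
    by (rule assms(1))
  have cost: "(\<lambda>k. stage_cost Q R (x k) (u k)) \<longlonglongrightarrow> 0"
    by (rule summable_LIMSEQ_zero[OF summable_stage_cost])
  have U: "u k \<in> Uset Up" for k
    using closed_loop_admissible by blast
  have "qf Q (fst (x k)) \<le> stage_cost Q R (x k) (u k)" for k
    by (rule stage_cost_ge_state[OF R U])
  then have "(\<lambda>k. qf Q (fst (x k))) \<longlonglongrightarrow> 0"
    by (intro tendsto_sandwich[OF _ _ tendsto_const cost] always_eventually allI)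
      (simp_all add: qf_nonneg Q)
  then show "(\<lambda>k. fst (x k)) \<longlonglongrightarrow> 0"
    by (rule pos_def_mat_tendsto_zero[OF Q])
  have "qf R (fst (snd (x (Suc k)))) \<le> stage_cost Q R (x k) (u k)" for k
    unfolding closed_loop by (rule stage_cost_ge_applied_input[OF Q U])
  then have "(\<lambda>k. qf R (fst (snd (x (Suc k))))) \<longlonglongrightarrow> 0"
    by (intro tendsto_sandwich[OF _ _ tendsto_const cost] always_eventually allI)
      (simp_all add: qf_nonneg R)
  then show "(\<lambda>k. fst (snd (x k))) \<longlonglongrightarrow> 0"
    by (rule LIMSEQ_imp_Suc[OF pos_def_mat_tendsto_zero[OF R]])
qed

lemma token_level_converges:
  assumes "rollout_mpc (fsys fp g c b) (Xset Xp Up b) U Xf l Vt N M (token_deficit \<sigma> b) x u"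
    and g: "0 \<le> g" and c: "0 \<le> c" and \<sigma>: "0 < \<sigma>"
  shows "(\<lambda>k. infdist (real_of_int (snd (snd (x k))))
      {real_of_int (max 0 (b - int N * g)) .. real_of_int b}) \<longlonglongrightarrow> 0"
    and "(\<lambda>j. infdist (real_of_int (snd (snd (x (j * M)))))
      {real_of_int (max 0 (b - int (N - M) * g)) .. real_of_int b}) \<longlonglongrightarrow> 0"
proof -
  interpret rollout_mpc "fsys fp g c b" "Xset Xp Up b" U Xf l Vt N M "token_deficit \<sigma> b" x u
    by (rule assms(1))
  have "(\<lambda>j. token_deficit \<sigma> b (planned_terminal j)) \<longlonglongrightarrow> 0"
    by (rule summable_LIMSEQ_zero[OF summable_margin])
  from order_tendstoD(2)[OF this \<sigma>] obtain J
    where J: "\<And>j. J \<le> j \<Longrightarrow> token_deficit \<sigma> b (planned_terminal j) < \<sigma>"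
    unfolding eventually_sequentially by blast
  have full: "b \<le> snd (snd (planned_terminal j))" if "J \<le> j" for j
    using J[OF that] by (simp add: token_deficit_def split: if_splits)
  have plan_level: "b - int (N - i) * g \<le> snd (snd (pred_traj (fsys fp g c b) (x (j * M)) (plan j) i))"
    if "J \<le> j" "i \<le> N" for i j
    using token_level_le_add[where fp = fp and g = g and b = b and y = "x (j * M)" and w = "plan j",
        OF c \<open>i \<le> N\<close>] full[OF \<open>J \<le> j\<close>]
    unfolding planned_terminal_def by linarith
  have in_interval: "infdist (real_of_int (snd (snd (x k)))) {real_of_int (max 0 lo) .. real_of_int b} = 0"
    if "lo \<le> snd (snd (x k))" for k lo
    using that closed_loop_admissible[of k] by (intro infdist_zero) (auto simp: Xset_def)
  have level: "b - int N * g \<le> snd (snd (x k))" if "J * M \<le> k" for k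
  proof -
    have "J \<le> k div M"
      using that M_pos by (metis div_le_mono div_mult_self_is_m)
    moreover have "k mod M \<le> N"
      using M_pos M_le_N by (meson less_imp_le_nat mod_less_divisor order_trans)
    moreover have "int (N - k mod M) * g \<le> int N * g"
      using g by (simp add: mult_right_mono)
    ultimately show ?thesis
      using plan_level[of "k div M" "k mod M"] closed_loop_eq_plan[of k] by simp
  qed
  show "(\<lambda>k. infdist (real_of_int (snd (snd (x k))))
      {real_of_int (max 0 (b - int N * g)) .. real_of_int b}) \<longlonglongrightarrow> 0"
    by (intro tendsto_eventually eventually_sequentiallyI[of "J * M"] in_interval level)
  have "b - int (N - M) * g \<le> snd (snd (x (Suc j * M)))" if "J \<le> j" for j
    using plan_level[OF that M_le_N] closed_loop_follows_plan[of M j] by (simp add: add.commute)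
  then have sampled_level: "b - int (N - M) * g \<le> snd (snd (x (j * M)))" if "Suc J \<le> j" for j
    using that by (metis Suc_le_D Suc_le_mono)
  show "(\<lambda>j. infdist (real_of_int (snd (snd (x (j * M)))))
      {real_of_int (max 0 (b - int (N - M) * g)) .. real_of_int b}) \<longlonglongrightarrow> 0"
    by (intro tendsto_eventually eventually_sequentiallyI[of "Suc J"] in_interval sampled_level)
qed

theorem theorem1:
  fixes fp :: "real^'n \<Rightarrow> real^'m \<Rightarrow> real^'n"
    and Xp :: "(real^'n) set" and Up :: "(real^'m) set"
    and Q :: "real^'n^'n" and R :: "real^'m^'m"
    and g c b :: int and q :: nat
    and Xfp :: "(real^'n) set" and kp :: "real^'n \<Rightarrow> real^'m" and Vfp :: "real^'n \<Rightarrow> real"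
    and \<sigma> :: real and r M N :: nat
    and x :: "nat \<Rightarrow> (real^'n) \<times> (real^'m) \<times> int" and u :: "nat \<Rightarrow> (real^'m) \<times> nat"
  assumes fp0: "fp 0 0 = 0"
    and Xp: "closed Xp" "0 \<in> Xp" and Up: "closed Up" "0 \<in> Up"
    and QR: "pos_def_mat Q" "pos_def_mat R"
    and gcb: "g \<ge> 1" "c \<ge> g" "b \<ge> c"
    and q_def: "q = nat \<lceil>real_of_int c / real_of_int g\<rceil>"
    and A1: "closed Xfp" "Xfp \<subseteq> Xp" "0 \<in> Xfp" "\<forall>xp\<in>Xfp. kp xp \<in> Up"
      "\<forall>xp\<in>Xfp. (\<forall>i\<in>{1..q-1}. fpi fp i xp (kp xp) \<in> Xp) \<and> fpi fp q xp (kp xp) \<in> Xfp"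
    and A2: "continuous_on Xfp Vfp" "Vfp 0 = 0" "\<forall>xp\<in>Xfp. xp \<noteq> 0 \<longrightarrow> Vfp xp > 0"
      "\<forall>xp\<in>Xfp. Vfp (fpi fp q xp (kp xp)) - Vfp xp
          \<le> - real q * qf R (kp xp) - (\<Sum>i<q. qf Q (fpi fp i xp (kp xp)))"
    and A3: "real_of_int c / real_of_int g \<notin> \<int>"
    and sigma: "\<sigma> > 0"
    and rMN: "r \<ge> 1" "M = r * q" "N \<ge> M"
    and dyn: "\<forall>k. x (Suc k) = fsys fp g c b (x k) (u k)"
    and rollout: "\<forall>j. P_feasible fp g c b Xp Up Xfp N (x (j * M)) \<longrightarrow>
        (\<exists>us. P_optimal fp g c b Xp Up Xfp Q R Vfp \<sigma> N (x (j * M)) us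
              \<and> (\<forall>i<M. u (j * M + i) = us i))"
    and init: "P_feasible fp g c b Xp Up Xfp N (x 0)"
  shows "(\<forall>j. P_feasible fp g c b Xp Up Xfp N (x (j * M)))
    \<and> (\<lambda>k. fst (x k)) \<longlonglongrightarrow> 0
    \<and> (\<lambda>k. fst (snd (x k))) \<longlonglongrightarrow> 0
    \<and> (\<lambda>k. infdist (real_of_int (snd (snd (x k))))
            {real_of_int (max 0 (b - int N * g)) .. real_of_int b}) \<longlonglongrightarrow> 0
    \<and> (\<lambda>j. infdist (real_of_int (snd (snd (x (j * M)))))
            {real_of_int (max 0 (b - int (N - M) * g)) .. real_of_int b}) \<longlonglongrightarrow> 0"
proof -
  \<comment> \<open>Closedness and continuity serve in the paper only to guarantee that optimizers exist;
    here their existence is part of the hypothesis \<open>rollout\<close>.\<close>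
  have q: "0 < q" "c < int q * g"
    using ceiling_quotient_gt[OF _ _ A3] gcb unfolding q_def by simp_all
  have mpc: "rollout_mpc (fsys fp g c b) (Xset Xp Up b) (Uset Up) (Xf_set Xfp Up c g b)
      (stage_cost Q R) (Vf Vfp \<sigma> b) N M (token_deficit \<sigma> b) x u"
    using gcb rMN
    by (intro token_bucket_rollout_mpc[where fp = fp and Vfp = Vfp and r = r,
        OF fp0 Xp(2) Up(2) QR _ _ _ q A1(2-5) A2(2-4) sigma _ _ _ dyn rollout init]) simp_all
  show ?thesis
    using rollout_mpc.recursive_feasibility[OF mpc] plant_converges[OF mpc QR]
      token_level_converges[OF mpc] gcb sigma
    by (simp add: P_feasible_def)
qed

end
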